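(* Let $p\ge2$ and $n,\ell,t$ be positive integers. Every $t$-tandem-duplication-correcting code $\mathcal{C}\subseteq\mathbb{Z}_p^n$ with respect to duplication length $\ell$ satisfies $$n-\log_p|\mathcal{C}|\ge t\log_p n-t\log_p\bigl(t(p-1)\bigr)-t(\ell+1).$$
   Context: $\mathbb{Z}_p=\{0,1,\dots,p-1\}$. For a word $\mathbf{x}$ over $\mathbb{Z}_p$ and $0\le i\le|\mathbf{x}|-\ell$, write $\mathbf{x}=\mathbf{u}\mathbf{v}\mathbf{w}$ with $|\mathbf{u}|=i$, $|\mathbf{v}|=\ell$; the tandem duplication of length $\ell$ at position $i$ produces $\mathbf{u}\mathbf{v}\mathbf{v}\mathbf{w}$. The ball $B_t^{\tau_\ell}(\mathbf{x})$ is the set of words obtainable from $\mathbf{x}$ by at most $t$ successive tandem duplications of length $\ell$. A code $\mathcal{C}\subseteq\mathbb{Z}_p^n$ is $t$-tandem-duplication-correcting (duplication length $\ell$) if $B_t^{\tau_\ell}(\mathbf{c})\cap B_t^{\tau_\ell}(\mathbf{c}')=\emptyset$ for all distinct $\mathbf{c},\mathbf{c}'\in\mathcal{C}$. *)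

theory Defs
  imports Complex_Main
begin

text \<open>Words over Z_p are lists of naturals with all entries below p.
  Tandem duplication of length l at position i (requires i + l \<le> |x|):
  x = u v w with |u| = i, |v| = l, giving u v v w.\<close>

definition tandem_dup :: "nat \<Rightarrow> nat \<Rightarrow> nat list \<Rightarrow> nat list" where
  "tandem_dup l i x = take i x @ take l (drop i x) @ drop i x"

definition tandem_step :: "nat \<Rightarrow> nat list \<Rightarrow> nat list \<Rightarrow> bool" where
  "tandem_step l x y \<longleftrightarrow> (\<exists>i. i + l \<le> length x \<and> y = tandem_dup l i x)"

definition tandem_ball :: "nat \<Rightarrow> nat \<Rightarrow> nat list \<Rightarrow> nat list set" where
  "tandem_ball l t x = {y. \<exists>k\<le>t. ((tandem_step l) ^^ k) x y}"

definition words :: "nat \<Rightarrow> nat \<Rightarrow> nat list set" where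
  "words p n = {x. length x = n \<and> (\<forall>a\<in>set x. a < p)}"

definition tandem_dup_correcting :: "nat \<Rightarrow> nat \<Rightarrow> nat \<Rightarrow> nat \<Rightarrow> nat list set \<Rightarrow> bool" where
  "tandem_dup_correcting p n l t C \<longleftrightarrow> C \<subseteq> words p n \<and>
     (\<forall>c\<in>C. \<forall>c'\<in>C. c \<noteq> c' \<longrightarrow> tandem_ball l t c \<inter> tandem_ball l t c' = {})"

end

theory Submission
  imports Defs
begin

(* Let phi(x) = shift_diff p l x, the l-step difference sequence (x_(j+l) - x_j mod p). A tandem
   duplication of length l at position i inserts a block of l zeros into phi(x) at position i, so
   the Hamming weight w of phi(x) is invariant, and conversely every way of inserting t such blocks
   into phi(c) is realised by t duplications of c. Distinct insertion patterns give at least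
   C(w + t, t) distinct sequences, so a codeword c of weight w has at least that many descendants
   after exactly t duplications, all of length n + t l and weight w. A word is determined by its
   first l letters and phi, so there are at most p^l C(n + t l - l, w) (p - 1)^w such words, and the
   descendant sets of distinct codewords are disjoint. Summing over w, the identity
   C(K, w + t) C(w + t, t) = C(K, t) C(K - t, w) and the binomial theorem give
   |C| C(K, t) (p - 1)^t <= p^(l + K) for K = n + t l - l + t, and C(K, t) >= (n / t)^t. *)

\<comment> \<open>The summand p avoids truncated subtraction.\<close>
definition shift_diff :: "nat \<Rightarrow> nat \<Rightarrow> nat list \<Rightarrow> nat list" where
  "shift_diff p l x = map (\<lambda>j. (x ! (j + l) + p - x ! j) mod p) [0..<length x - l]"

definition hamming_weight :: "'a::zero list \<Rightarrow> nat" where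
  "hamming_weight z = length (filter (\<lambda>a. a \<noteq> 0) z)"

definition zero_ins :: "nat \<Rightarrow> nat \<Rightarrow> 'a::zero list \<Rightarrow> 'a list" where
  "zero_ins l k z = take k z @ replicate l 0 @ drop k z"

definition zero_ins_step :: "nat \<Rightarrow> 'a::zero list \<Rightarrow> 'a list \<Rightarrow> bool" where
  "zero_ins_step l z z' \<longleftrightarrow> (\<exists>i\<le>length z. z' = zero_ins l i z)"

lemma tandem_dup_eq: "i + l \<le> length x \<Longrightarrow> tandem_dup l i x = take (i + l) x @ drop i x"
  unfolding tandem_dup_def by (simp add: take_add)

lemma length_tandem_dup [simp]: "i + l \<le> length x \<Longrightarrow> length (tandem_dup l i x) = length x + l"
  by (simp add: tandem_dup_eq)

lemma nth_tandem_dup: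
  "i + l \<le> length x \<Longrightarrow> k < length x + l \<Longrightarrow>
    tandem_dup l i x ! k = (if k < i + l then x ! k else x ! (k - l))"
  by (auto simp: tandem_dup_eq nth_append min_def)

lemma set_tandem_dup: "i + l \<le> length x \<Longrightarrow> set (tandem_dup l i x) \<subseteq> set x"
  by (auto simp: tandem_dup_eq dest: in_set_takeD in_set_dropD)

lemma length_shift_diff [simp]: "length (shift_diff p l x) = length x - l"
  by (simp add: shift_diff_def)

lemma nth_shift_diff: "j < length x - l \<Longrightarrow> shift_diff p l x ! j = (x ! (j + l) + p - x ! j) mod p"
  by (simp add: shift_diff_def)

lemma shift_diff_tandem_dup:
  assumes "i + l \<le> length x"
  shows "shift_diff p l (tandem_dup l i x) = zero_ins l i (shift_diff p l x)"
proof (rule nth_equalityI)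
  show "length (shift_diff p l (tandem_dup l i x)) = length (zero_ins l i (shift_diff p l x))"
    using assms by (simp add: zero_ins_def)
next
  fix j assume "j < length (shift_diff p l (tandem_dup l i x))"
  then have j: "j < length x" using assms by simp
  consider "j < i" | "i \<le> j" "j < i + l" | "i + l \<le> j" by linarith
  then show "shift_diff p l (tandem_dup l i x) ! j = zero_ins l i (shift_diff p l x) ! j"
  proof cases
    case 1
    then show ?thesis using assms j by (simp add: nth_shift_diff zero_ins_def nth_append nth_tandem_dup)
  next
    case 2
    then show ?thesis using assms j by (simp add: nth_shift_diff zero_ins_def nth_append nth_tandem_dup min_def)
  next
    case 3
    then have "zero_ins l i (shift_diff p l x) ! j = shift_diff p l x ! (j - l)"
      using assms j by (auto simp: zero_ins_def nth_append min_def)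
    then show ?thesis using assms j 3 by (simp add: nth_shift_diff nth_tandem_dup)
  qed
qed

lemma hamming_weight_Cons [simp]:
  "hamming_weight (a # z) = (if a = 0 then hamming_weight z else Suc (hamming_weight z))"
  by (simp add: hamming_weight_def)

lemma hamming_weight_le_length: "hamming_weight z \<le> length z"
  unfolding hamming_weight_def by (rule length_filter_le)

lemma hamming_weight_zero_ins [simp]: "hamming_weight (zero_ins l k z) = hamming_weight z"
proof -
  have "hamming_weight z = hamming_weight (take k z @ drop k z)" by simp
  then show ?thesis unfolding hamming_weight_def zero_ins_def by (simp del: append_take_drop_id)
qed

lemma length_tandem_steps: "(tandem_step l ^^ k) x y \<Longrightarrow> length y = length x + k * l"
  by (induction k arbitrary: y) (auto simp: tandem_step_def)

lemma set_tandem_steps: "(tandem_step l ^^ k) x y \<Longrightarrow> set y \<subseteq> set x"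
  by (induction k arbitrary: y) (fastforce simp: tandem_step_def dest: set_tandem_dup)+

lemma hamming_weight_shift_diff_tandem_steps:
  "(tandem_step l ^^ k) x y \<Longrightarrow> hamming_weight (shift_diff p l y) = hamming_weight (shift_diff p l x)"
  by (induction k arbitrary: y) (auto simp: tandem_step_def shift_diff_tandem_dup)

lemma zero_ins_steps_lift_to_tandem_steps:
  assumes "(zero_ins_step l ^^ k) (shift_diff p l x) z" and "l \<le> length x"
  shows "\<exists>y. (tandem_step l ^^ k) x y \<and> shift_diff p l y = z"
  using assms(1)
proof (induction k arbitrary: z)
  case (Suc k)
  then obtain z0 where z0: "(zero_ins_step l ^^ k) (shift_diff p l x) z0" "zero_ins_step l z0 z"
    by auto
  from z0(2) obtain i where i: "i \<le> length z0" "z = zero_ins l i z0"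
    unfolding zero_ins_step_def by blast
  from Suc.IH[OF z0(1)] obtain y where y: "(tandem_step l ^^ k) x y" "shift_diff p l y = z0"
    by blast
  have il: "i + l \<le> length y"
    using i(1) y assms(2) length_tandem_steps[OF y(1)] by auto
  then have "tandem_step l y (tandem_dup l i y)"
    by (auto simp: tandem_step_def)
  then have "(tandem_step l ^^ Suc k) x (tandem_dup l i y)"
    using y(1) by auto
  moreover have "shift_diff p l (tandem_dup l i y) = z"
    using shift_diff_tandem_dup[OF il] y(2) i(2) by simp
  ultimately show ?case by blast
qed simp

lemma zero_ins_steps_Cons: "(zero_ins_step l ^^ k) z z' \<Longrightarrow> (zero_ins_step l ^^ k) (a # z) (a # z')"
proof (induction k arbitrary: z')
  case (Suc k)
  then obtain w i where w: "(zero_ins_step l ^^ k) z w" and i: "i \<le> length w" "z' = zero_ins l i w"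
    by (metis relpowp_Suc_E zero_ins_step_def)
  have "zero_ins_step l (a # w) (a # z')"
    unfolding zero_ins_step_def using i by (intro exI[of _ "Suc i"]) (simp add: zero_ins_def)
  then show ?case using Suc.IH[OF w] by auto
qed simp

lemma zero_ins_steps_replicate: "(zero_ins_step l ^^ k) z (replicate (k * l) 0 @ z)"
proof (induction k)
  case (Suc k)
  have "zero_ins_step l (replicate (k * l) 0 @ z) (replicate (Suc k * l) 0 @ z)"
    unfolding zero_ins_step_def zero_ins_def
    by (intro exI[of _ 0]) (simp add: replicate_add[symmetric] add.commute)
  then show ?case using Suc by auto
qed simp

lemma zero_ins_steps_length_set:
  "(zero_ins_step l ^^ k) z z' \<Longrightarrow> length z' = length z + k * l \<and> set z' \<subseteq> insert 0 (set z)"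
proof (induction k arbitrary: z')
  case (Suc k)
  then obtain w i where w: "(zero_ins_step l ^^ k) z w" and i: "i \<le> length w" "z' = zero_ins l i w"
    by (metis relpowp_Suc_E zero_ins_step_def)
  have "set z' \<subseteq> insert 0 (set w)"
    using i by (auto simp: zero_ins_def dest: in_set_takeD in_set_dropD)
  then show ?case using Suc.IH[OF w] i by (auto simp: zero_ins_def)
qed auto

lemma finite_zero_ins_steps: "finite {z'. (zero_ins_step l ^^ k) z z'}"
proof (rule finite_subset)
  show "{z'. (zero_ins_step l ^^ k) z z'} \<subseteq> {xs. set xs \<subseteq> insert 0 (set z) \<and> length xs = length z + k * l}"
    using zero_ins_steps_length_set by blast
qed (simp add: finite_lists_length_eq)

lemma replicate_zero_Cons_eq_iff:
  assumes "a \<noteq> 0"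
  shows "replicate m 0 @ a # w = replicate m' 0 @ a # w' \<longleftrightarrow> m = m' \<and> w = w'"
proof (induction m arbitrary: m')
  case 0
  then show ?case using assms by (cases m') auto
next
  case (Suc m)
  then show ?case using assms by (cases m') auto
qed

lemma card_zero_ins_steps_ge:
  fixes z :: "'a::zero list"
  assumes "0 < l"
  shows "(hamming_weight z + k) choose k \<le> card {z'. (zero_ins_step l ^^ k) z z'}"
proof (induction z arbitrary: k)
  case Nil
  have "replicate (k * l) 0 \<in> {z'. (zero_ins_step l ^^ k) [] z'}"
    using zero_ins_steps_replicate[where z = "[]"] by simp
  then have "0 < card {z'. (zero_ins_step l ^^ k) ([] :: 'a list) z'}"
    using finite_zero_ins_steps card_gt_0_iff by blast
  then show ?case by (simp add: hamming_weight_def)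
next
  case (Cons a z)
  define R where "R j = {z'. (zero_ins_step l ^^ j) z z'}" for j
  show ?case
  proof (cases "a = 0")
    case True
    have "inj_on (Cons a) (R k)" "Cons a ` R k \<subseteq> {z'. (zero_ins_step l ^^ k) (a # z) z'}"
      using zero_ins_steps_Cons by (auto simp: R_def)
    then have "card (R k) \<le> card {z'. (zero_ins_step l ^^ k) (a # z) z'}"
      by (intro card_inj_on_le[OF _ _ finite_zero_ins_steps])
    then show ?thesis using Cons.IH[of k] True by (simp add: R_def)
  next
    case False
    \<comment> \<open>Put j blocks into z and the other k - j in front of a; since a is nonzero, the
      number of leading zeros recovers j.\<close>
    define g where "g = (\<lambda>(j, w). replicate ((k - j) * l) 0 @ a # w)"
    have "inj_on g (SIGMA j:{..k}. R j)"
    proof (rule inj_onI, clarify)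
      fix j w j' w' assume "j \<le> k" "j' \<le> k" "g (j, w) = g (j', w')"
      then have "k - j = k - j' \<and> w = w'"
        using False assms by (simp add: g_def replicate_zero_Cons_eq_iff)
      with \<open>j \<le> k\<close> \<open>j' \<le> k\<close> show "j = j' \<and> w = w'"
        by auto
    qed
    moreover have "g ` (SIGMA j:{..k}. R j) \<subseteq> {z'. (zero_ins_step l ^^ k) (a # z) z'}"
    proof clarify
      fix j w assume "j \<le> k" "w \<in> R j"
      then have "(zero_ins_step l ^^ j) (a # z) (a # w)"
        by (simp add: R_def zero_ins_steps_Cons)
      moreover have "(zero_ins_step l ^^ (k - j)) (a # w) (g (j, w))"
        unfolding g_def prod.case by (rule zero_ins_steps_replicate)
      ultimately have "(zero_ins_step l ^^ j OO zero_ins_step l ^^ (k - j)) (a # z) (g (j, w))"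
        by (rule relcomppI)
      then show "(zero_ins_step l ^^ k) (a # z) (g (j, w))"
        using \<open>j \<le> k\<close> by (simp flip: relpowp_add)
    qed
    ultimately have "card (SIGMA j:{..k}. R j) \<le> card {z'. (zero_ins_step l ^^ k) (a # z) z'}"
      by (intro card_inj_on_le[OF _ _ finite_zero_ins_steps])
    moreover have "card (SIGMA j:{..k}. R j) = (\<Sum>j\<le>k. card (R j))"
      by (simp add: R_def finite_zero_ins_steps)
    moreover have "(\<Sum>j\<le>k. (hamming_weight z + j) choose j) \<le> (\<Sum>j\<le>k. card (R j))"
      unfolding R_def by (intro sum_mono Cons.IH)
    ultimately show ?thesis
      using False by (simp add: sum_choose_lower)
  qed
qed

lemma words_eq_lists: "words p n = {xs. set xs \<subseteq> {..<p} \<and> length xs = n}"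
  by (auto simp: words_def)

lemma finite_words: "finite (words p n)"
  by (simp add: words_eq_lists finite_lists_length_eq)

lemma card_words: "card (words p n) = p ^ n"
  by (simp add: words_eq_lists card_lists_length_eq)

lemma tandem_steps_words: "(tandem_step l ^^ k) x y \<Longrightarrow> x \<in> words p n \<Longrightarrow> y \<in> words p (n + k * l)"
  using length_tandem_steps set_tandem_steps by (fastforce simp: words_def)

lemma shift_diff_words: "x \<in> words p n \<Longrightarrow> shift_diff p l x \<in> words p (n - l)"
  by (cases "p = 0") (auto simp: words_def shift_diff_def)

lemma add_diff_mod_cancel: "a < p \<Longrightarrow> b < (p::nat) \<Longrightarrow> (a + (b + p - a) mod p) mod p = b"
  by (simp add: mod_add_right_eq)

lemma inj_on_take_shift_diff:
  assumes "0 < l"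
  shows "inj_on (\<lambda>x. (take l x, shift_diff p l x)) (words p n)"
proof (rule inj_onI)
  fix x y assume x: "x \<in> words p n" and y: "y \<in> words p n"
    and eq: "(take l x, shift_diff p l x) = (take l y, shift_diff p l y)"
  have "x ! k = y ! k" if "k < n" for k
    using that
  proof (induction k rule: less_induct)
    case (less k)
    show ?case
    proof (cases "k < l")
      case True
      then show ?thesis using eq by (metis nth_take prod.inject)
    next
      case False
      define j where "j = k - l"
      have jk: "k = j + l" "j < k" "j < length x - l" "j < length y - l"
        using False less.prems assms x y by (auto simp: j_def words_def)
      have "x ! k = (x ! j + shift_diff p l x ! j) mod p"
        using jk x y less.prems by (simp add: nth_shift_diff add_diff_mod_cancel words_def)
      also have "\<dots> = (y ! j + shift_diff p l y ! j) mod p"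
        using eq less.IH[of j] jk less.prems by simp
      also have "\<dots> = y ! k"
        using jk x y less.prems by (simp add: nth_shift_diff add_diff_mod_cancel words_def)
      finally show ?thesis .
    qed
  qed
  then show "x = y"
    using x y by (intro nth_equalityI) (auto simp: words_def)
qed

lemma words_Suc_hamming_weight_0:
  "0 < p \<Longrightarrow> {z \<in> words p (Suc m). hamming_weight z = 0} = Cons 0 ` {z \<in> words p m. hamming_weight z = 0}"
proof (rule set_eqI, rule iffI)
  fix z assume "z \<in> {z \<in> words p (Suc m). hamming_weight z = 0}"
  then show "z \<in> Cons 0 ` {z \<in> words p m. hamming_weight z = 0}"
    by (cases z) (auto simp: words_def split: if_splits)
qed (auto simp: words_def)

lemma words_Suc_hamming_weight_Suc:
  "0 < p \<Longrightarrow> {z \<in> words p (Suc m). hamming_weight z = Suc i} =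
     Cons 0 ` {z \<in> words p m. hamming_weight z = Suc i} \<union>
     (\<lambda>(a, z). a # z) ` ({1..<p} \<times> {z \<in> words p m. hamming_weight z = i})"
proof (rule set_eqI, rule iffI)
  fix z assume "z \<in> {z \<in> words p (Suc m). hamming_weight z = Suc i}"
  then show "z \<in> Cons 0 ` {z \<in> words p m. hamming_weight z = Suc i} \<union>
     (\<lambda>(a, z). a # z) ` ({1..<p} \<times> {z \<in> words p m. hamming_weight z = i})"
    by (cases z) (auto simp: words_def split: if_splits)
qed (auto simp: words_def)

lemma card_words_hamming_weight:
  assumes "0 < p"
  shows "card {z \<in> words p m. hamming_weight z = i} = (m choose i) * (p - 1) ^ i"
proof (induction m arbitrary: i)
  case 0
  have "{z \<in> words p 0. hamming_weight z = i} = (if i = 0 then {[]} else {})"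
    by (auto simp: words_def hamming_weight_def)
  then show ?case by simp
next
  case (Suc m)
  show ?case
  proof (cases i)
    case 0
    then show ?thesis using Suc.IH assms by (simp add: words_Suc_hamming_weight_0 card_image)
  next
    case (Suc j)
    have "inj_on (\<lambda>(a, z). a # z) ({1..<p} \<times> {z \<in> words p m. hamming_weight z = j})"
      by (auto simp: inj_on_def)
    then have "card {z \<in> words p (Suc m). hamming_weight z = i} =
        (m choose Suc j) * (p - 1) ^ Suc j + (p - 1) * ((m choose j) * (p - 1) ^ j)"
      unfolding Suc words_Suc_hamming_weight_Suc[OF assms] using Suc.IH
      by (subst card_Un_disjoint) (auto simp: finite_words card_image card_cartesian_product)
    then show ?thesis unfolding Suc binomial_Suc_Suc by (simp add: distrib_left distrib_right mult_ac)
  qed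
qed

lemma card_mult_le_card_if_disjoint:
  assumes "finite Y" and "\<And>c. c \<in> A \<Longrightarrow> D c \<subseteq> Y" and "\<And>c. c \<in> A \<Longrightarrow> m \<le> card (D c)"
    and "\<And>c c'. c \<in> A \<Longrightarrow> c' \<in> A \<Longrightarrow> c \<noteq> c' \<Longrightarrow> D c \<inter> D c' = {}"
  shows "card A * m \<le> card Y"
proof (cases "finite A")
  case True
  have fin: "c \<in> A \<Longrightarrow> finite (D c)" for c
    using assms(1,2) finite_subset by blast
  have "card A * m = (\<Sum>c\<in>A. m)" by simp
  also have "\<dots> \<le> (\<Sum>c\<in>A. card (D c))" using assms(3) by (rule sum_mono)
  also have "\<dots> = card (\<Union>c\<in>A. D c)"
    using True fin assms(4) by (simp add: card_UN_disjoint)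
  also have "\<dots> \<le> card Y" using assms(1,2) by (intro card_mono) auto
  finally show ?thesis .
qed simp

lemma finite_tandem_steps: "finite {y. (tandem_step l ^^ k) x y}"
proof (rule finite_subset)
  show "{y. (tandem_step l ^^ k) x y} \<subseteq> {ys. set ys \<subseteq> set x \<and> length ys = length x + k * l}"
    using set_tandem_steps length_tandem_steps by blast
qed (simp add: finite_lists_length_eq)

lemma card_tandem_steps_ge:
  assumes "0 < l" and "l \<le> length x"
  shows "(hamming_weight (shift_diff p l x) + k) choose k \<le> card {y. (tandem_step l ^^ k) x y}"
proof -
  have "{z. (zero_ins_step l ^^ k) (shift_diff p l x) z} \<subseteq> shift_diff p l ` {y. (tandem_step l ^^ k) x y}"
    using zero_ins_steps_lift_to_tandem_steps[OF _ assms(2)] by blast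
  then have "card {z. (zero_ins_step l ^^ k) (shift_diff p l x) z} \<le> card (shift_diff p l ` {y. (tandem_step l ^^ k) x y})"
    using finite_tandem_steps by (intro card_mono) simp_all
  also have "\<dots> \<le> card {y. (tandem_step l ^^ k) x y}"
    using finite_tandem_steps by (rule card_image_le)
  finally show ?thesis
    using card_zero_ins_steps_ge[OF assms(1)] le_trans by blast
qed

lemma card_words_shift_diff_weight_le:
  assumes "0 < l" and "l \<le> N" and "0 < p"
  shows "card {y \<in> words p N. hamming_weight (shift_diff p l y) = i} \<le> p ^ l * (((N - l) choose i) * (p - 1) ^ i)"
proof -
  let ?Y = "{y \<in> words p N. hamming_weight (shift_diff p l y) = i}"
  have "card ?Y \<le> card (words p l \<times> {z \<in> words p (N - l). hamming_weight z = i})"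
  proof (rule card_inj_on_le)
    show "inj_on (\<lambda>y. (take l y, shift_diff p l y)) ?Y"
      using inj_on_take_shift_diff[OF \<open>0 < l\<close>, of p N] by (rule inj_on_subset) simp
    show "(\<lambda>y. (take l y, shift_diff p l y)) ` ?Y \<subseteq> words p l \<times> {z \<in> words p (N - l). hamming_weight z = i}"
      using \<open>l \<le> N\<close> shift_diff_words by (fastforce simp: words_def dest: in_set_takeD)
  qed (simp add: finite_words)
  also have "\<dots> = p ^ l * (((N - l) choose i) * (p - 1) ^ i)"
    by (simp add: card_cartesian_product card_words card_words_hamming_weight[OF \<open>0 < p\<close>])
  finally show ?thesis .
qed

lemma card_weight_class_mult_le:
  assumes code: "tandem_dup_correcting p n l t C" and "l \<le> n" and "0 < l" and "0 < p"
  shows "card {c \<in> C. hamming_weight (shift_diff p l c) = i} * ((i + t) choose t)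
           \<le> p ^ l * (((n + t * l - l) choose i) * (p - 1) ^ i)"
proof -
  define Y where "Y = {y \<in> words p (n + t * l). hamming_weight (shift_diff p l y) = i}"
  define D where "D c = {y. (tandem_step l ^^ t) c y}" for c
  have words: "C \<subseteq> words p n"
    using code by (simp add: tandem_dup_correcting_def)
  have D_subset: "D c \<subseteq> Y" if "c \<in> {c \<in> C. hamming_weight (shift_diff p l c) = i}" for c
  proof
    fix y assume "y \<in> D c"
    then have "(tandem_step l ^^ t) c y" by (simp add: D_def)
    then show "y \<in> Y"
      using that words tandem_steps_words hamming_weight_shift_diff_tandem_steps
      by (auto simp: Y_def)
  qed
  have "finite Y"
    by (simp add: Y_def finite_words)
  then have "card {c \<in> C. hamming_weight (shift_diff p l c) = i} * ((i + t) choose t) \<le> card Y"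
  proof (rule card_mult_le_card_if_disjoint)
    fix c assume c: "c \<in> {c \<in> C. hamming_weight (shift_diff p l c) = i}"
    then show "D c \<subseteq> Y" by (rule D_subset)
    have "l \<le> length c" using c words \<open>l \<le> n\<close> by (auto simp: words_def)
    then have "(hamming_weight (shift_diff p l c) + t) choose t \<le> card (D c)"
      unfolding D_def by (rule card_tandem_steps_ge[OF \<open>0 < l\<close>])
    then show "(i + t) choose t \<le> card (D c)"
      using c by simp
  next
    fix c c' assume "c \<in> {c \<in> C. hamming_weight (shift_diff p l c) = i}"
      and "c' \<in> {c \<in> C. hamming_weight (shift_diff p l c) = i}" and "c \<noteq> c'"
    moreover have "D c \<subseteq> tandem_ball l t c" for c
      by (auto simp: D_def tandem_ball_def)
    ultimately show "D c \<inter> D c' = {}"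
      using code unfolding tandem_dup_correcting_def by blast
  qed
  also have "card Y \<le> p ^ l * (((n + t * l - l) choose i) * (p - 1) ^ i)"
    unfolding Y_def using assms(2-4) by (intro card_words_shift_diff_weight_le) simp_all
  finally show ?thesis .
qed

lemma sum_mult_binomial_le_power:
  fixes a :: "nat \<Rightarrow> real" and c q :: real
  assumes "0 \<le> c" and "0 \<le> q"
    and bound: "\<And>i. i \<le> m \<Longrightarrow> a i * ((i + t) choose t) \<le> c * ((m choose i) * q ^ i)"
  shows "(\<Sum>i\<le>m. a i) * ((m + t) choose t) * q ^ t \<le> c * (1 + q) ^ (m + t)"
proof -
  have term_le: "a i * ((m + t) choose t) * q ^ t \<le> c * (((m + t) choose (i + t)) * q ^ (i + t))"
    if "i \<le> m" for i
  proof -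
    have "((m + t) choose (i + t)) * ((i + t) choose t) = ((m + t) choose t) * (m choose i)"
      using choose_mult_lemma[of i "m - i" t] that by simp
    then have choose_eq: "real ((m + t) choose (i + t)) * ((i + t) choose t) = ((m + t) choose t) * (m choose i)"
      by (metis of_nat_mult)
    have "a i * ((m + t) choose t) * q ^ t * ((i + t) choose t)
        = (a i * ((i + t) choose t)) * (((m + t) choose t) * q ^ t)"
      by (simp add: ac_simps)
    also have "\<dots> \<le> c * ((m choose i) * q ^ i) * (((m + t) choose t) * q ^ t)"
      using bound[OF that] assms(2) by (intro mult_right_mono) simp_all
    also have "\<dots> = c * (((m + t) choose (i + t)) * q ^ (i + t)) * ((i + t) choose t)"
      using choose_eq by (simp add: power_add ac_simps)
    finally show ?thesis by simp
  qed
  have "(\<Sum>i\<le>m. a i) * ((m + t) choose t) * q ^ t = (\<Sum>i\<le>m. a i * ((m + t) choose t) * q ^ t)"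
    by (simp add: sum_distrib_right)
  also have "\<dots> \<le> c * (\<Sum>i\<le>m. ((m + t) choose (i + t)) * q ^ (i + t))"
    unfolding sum_distrib_left by (rule sum_mono) (simp add: term_le)
  also have "(\<Sum>i\<le>m. ((m + t) choose (i + t)) * q ^ (i + t)) = (\<Sum>j\<in>(\<lambda>i. i + t) ` {..m}. ((m + t) choose j) * q ^ j)"
    by (simp add: sum.reindex)
  also have "\<dots> \<le> (\<Sum>j\<le>m + t. ((m + t) choose j) * q ^ j)"
    using assms(2) by (intro sum_mono2) auto
  also have "\<dots> = (1 + q) ^ (m + t)"
    using binomial_ring[of q 1 "m + t"] by (simp add: ac_simps)
  finally show ?thesis using assms(1) by (simp add: mult_left_mono)
qed

lemma card_tandem_dup_correcting_le:
  assumes code: "tandem_dup_correcting p n l t C" and "l \<le> n" and "0 < l" and "0 < t" and "0 < p"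
  shows "real (card C) * ((real p - 1) * real n / real t) ^ t \<le> real p ^ (n + t * l + t)"
proof -
  define m where "m = n + t * l - l"
  define w where "w c = hamming_weight (shift_diff p l c)" for c
  have words: "C \<subseteq> words p n"
    using code by (simp add: tandem_dup_correcting_def)
  then have "finite C"
    using finite_words finite_subset by blast
  moreover have "w ` C \<subseteq> {..m}"
  proof clarify
    fix c assume "c \<in> C"
    then have "w c \<le> n - l"
      using words hamming_weight_le_length[of "shift_diff p l c"] by (auto simp: w_def words_def)
    then show "w c \<le> m" by (simp add: m_def)
  qed
  ultimately have card_sum: "card C = (\<Sum>i\<le>m. card {c \<in> C. w c = i})"
    using sum.group[of C "{..m}" w "\<lambda>_. 1 :: nat"] by simp
  have "real (card C) * ((m + t) choose t) * (real p - 1) ^ t \<le> real p ^ l * (1 + (real p - 1)) ^ (m + t)"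
    unfolding card_sum of_nat_sum
  proof (rule sum_mult_binomial_le_power)
    fix i
    have "real (card {c \<in> C. w c = i} * ((i + t) choose t)) \<le> real (p ^ l * ((m choose i) * (p - 1) ^ i))"
      using card_weight_class_mult_le[OF assms(1,2,3,5)] unfolding w_def m_def of_nat_le_iff .
    then show "real (card {c \<in> C. w c = i}) * ((i + t) choose t) \<le> real p ^ l * ((m choose i) * (real p - 1) ^ i)"
      using \<open>0 < p\<close> by (simp add: of_nat_diff)
  qed (use \<open>0 < p\<close> in simp_all)
  then have card_le: "real (card C) * ((m + t) choose t) * (real p - 1) ^ t \<le> real p ^ (l + (m + t))"
    by (simp add: power_add)
  have "l \<le> t * l" using \<open>0 < t\<close> by simp
  then have "n \<le> m + t" unfolding m_def by linarith
  then have "(real n / real t) ^ t \<le> (real (m + t) / real t) ^ t"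
    by (intro power_mono divide_right_mono) simp_all
  also have "\<dots> \<le> (m + t) choose t"
    by (rule binomial_ge_n_over_k_pow_k) simp
  finally have binomial_ge: "(real n / real t) ^ t \<le> (m + t) choose t" .
  have "real (card C) * ((real p - 1) * real n / real t) ^ t
      = real (card C) * ((real p - 1) ^ t * (real n / real t) ^ t)"
    by (simp add: power_mult_distrib power_divide)
  also have "\<dots> \<le> real (card C) * ((real p - 1) ^ t * ((m + t) choose t))"
    using \<open>0 < p\<close> binomial_ge by (intro mult_left_mono) simp_all
  also have "\<dots> \<le> real p ^ (l + (m + t))"
    using card_le by (simp add: ac_simps)
  also have "l + (m + t) = n + t * l + t"
    using \<open>l \<le> n\<close> by (simp add: m_def)
  finally show ?thesis .
qed

\<comment> \<open>The hypothesis \<open>Q \<le> b ^ m\<close> is only needed for k = 0, where \<open>log b 0 = 0\<close>.\<close>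
lemma log_add_log_le_of_mult_le_power:
  fixes b Q :: real and k :: nat
  assumes "1 < b" and "0 < Q" and "real k * Q \<le> b ^ m" and "Q \<le> b ^ m"
  shows "log b (real k) + log b Q \<le> m"
proof (cases "k = 0")
  case True
  then have "log b (real k) = 0" by (simp add: log_def)
  then show ?thesis using assms by (simp add: log_le_iff powr_realpow)
next
  case False
  then have "log b (real k * Q) \<le> m" using assms by (simp add: log_le_iff powr_realpow)
  then show ?thesis using False assms(2) by (simp add: log_mult_pos)
qed

lemma log_card_tandem_dup_correcting_le:
  assumes code: "tandem_dup_correcting p n l t C" and "l \<le> n" and "0 < l" and "0 < t" and "2 \<le> p"
    and "0 < n"
  shows "log p (card C) + t * (log p (real p - 1) + log p n - log p t) \<le> n + t * l + t"
proof -
  define Q where "Q = ((real p - 1) * real n / real t) ^ t"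
  have p: "1 < real p" "0 < p" using \<open>2 \<le> p\<close> by simp_all
  have singleton_code: "tandem_dup_correcting p n l t {replicate n 0}"
    using p by (simp add: tandem_dup_correcting_def words_def)
  have "real (card C) * Q \<le> real p ^ (n + t * l + t)"
    using card_tandem_dup_correcting_le[OF code assms(2-4) p(2)] by (simp add: Q_def)
  moreover have "Q \<le> real p ^ (n + t * l + t)"
    using card_tandem_dup_correcting_le[OF singleton_code assms(2-4) p(2)] by (simp add: Q_def)
  moreover have "0 < Q"
    using assms by (simp add: Q_def)
  ultimately have "log p (card C) + log p Q \<le> n + t * l + t"
    using p by (intro log_add_log_le_of_mult_le_power) simp_all
  moreover have "log p Q = t * (log p (real p - 1) + log p n - log p t)"
    using assms by (simp add: Q_def log_nat_power log_mult_pos log_divide_pos)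
  ultimately show ?thesis by simp
qed

lemma log_card_le_if_subset_words:
  assumes "C \<subseteq> words p n" and "1 < p"
  shows "log p (card C) \<le> n"
proof -
  have "card C \<le> p ^ n"
    using assms(1) card_mono[OF finite_words] by (simp add: card_words)
  then have "real (card C) \<le> real p ^ n"
    by (metis of_nat_le_iff of_nat_power)
  then have "log p (card C) + log p 1 \<le> n"
    using assms(2) by (intro log_add_log_le_of_mult_le_power) simp_all
  then show ?thesis by simp
qed

theorem lemma2:
  fixes p n l t :: nat and C :: "nat list set"
  assumes "p \<ge> 2" and "n > 0" and "l > 0" and "t > 0"
    and "tandem_dup_correcting p n l t C"
  shows "real n - log (real p) (real (card C))
           \<ge> real t * log (real p) (real n) - real t * log (real p) (real t * (real p - 1))
             - real t * (real l + 1)"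
proof -
  have log_nonneg: "0 \<le> t * log p t" "0 \<le> t * log p (real p - 1)"
    using assms(1,4) by simp_all
  have log_mult_t_p: "log p (t * (real p - 1)) = log p t + log p (real p - 1)"
    using assms(1,4) by (simp add: log_mult_pos)
  show ?thesis
  proof (cases "l \<le> n")
    case True
    then show ?thesis
      using log_card_tandem_dup_correcting_le[OF assms(5) True assms(3,4,1,2)] log_nonneg
      unfolding log_mult_t_p by (simp add: algebra_simps)
  next
    case False
    have "n < 2 ^ l" using False less_exp[of l] by linarith
    also have "\<dots> \<le> p ^ l" using assms(1) by (simp add: power_mono)
    finally have "t * log p n \<le> t * l"
      using assms(1,2) by (simp add: log_of_power_le mult_left_mono)
    moreover have "log p (card C) \<le> n"
      using assms(1,5) by (intro log_card_le_if_subset_words) (simp_all add: tandem_dup_correcting_def)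
    ultimately show ?thesis
      using log_nonneg unfolding log_mult_t_p by (simp add: algebra_simps)
  qed
qed

end
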